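(* Let $r\ge2$, $\ell\ge2$. There is a ring isomorphism $\rho:\widehat{\mathcal{T}}_{2\ell}(A_{2r+1})\to\widetilde{\mathcal{T}}_\ell(C_r)$ determined by (for $u\in\frac12\mathbb{Z}$): $S^{(a)}_m(u)\mapsto T^{(a)}_m(u)$ ($1\le a\le r-1$, $1\le m\le 2\ell-1$); $S^{(r)}_{2m}(u)\mapsto T^{(r)}_m(u-\frac12)T^{(r)}_m(u+\frac12)$ ($1\le m\le\ell-1$); $S^{(r)}_{2m+1}(u)\mapsto T^{(r)}_m(u)T^{(r)}_{m+1}(u)$ ($0\le m\le\ell-1$); $S^{(r+1)}_{2m}(u)\mapsto T^{(r)}_m(u)^2$ ($1\le m\le\ell-1$); and $\rho(S^{(a)}_m(u))=(-1)^m\rho(S^{(2r+2-a)}_m(u))$ for $r+2\le a\le 2r+1$; here $T^{(r)}_0(u)=1$.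
   Context: $\widetilde{\mathcal{T}}_\ell(C_r)$ is the commutative ring with generators $T^{(a)}_m(u)^{\pm1}$ ($1\le a\le r-1$, $1\le m\le 2\ell-1$; $a=r$, $1\le m\le\ell-1$; $u\in\frac12\mathbb{Z}$) and $T^{(r)}_\ell(u)$ ($u\in\frac12\mathbb{Z}$), with relations, for all $u$: $T^{(a)}_m(u-\frac12)T^{(a)}_m(u+\frac12)=T^{(a)}_{m-1}(u)T^{(a)}_{m+1}(u)+T^{(a-1)}_m(u)T^{(a+1)}_m(u)$ ($1\le a\le r-2$, $1\le m\le2\ell-1$); $T^{(r-1)}_{2m}(u-\frac12)T^{(r-1)}_{2m}(u+\frac12)=T^{(r-1)}_{2m-1}(u)T^{(r-1)}_{2m+1}(u)+T^{(r-2)}_{2m}(u)T^{(r)}_m(u-\frac12)T^{(r)}_m(u+\frac12)$ ($1\le m\le\ell-1$); $T^{(r-1)}_{2m+1}(u-\frac12)T^{(r-1)}_{2m+1}(u+\frac12)=T^{(r-1)}_{2m}(u)T^{(r-1)}_{2m+2}(u)+T^{(r-2)}_{2m+1}(u)T^{(r)}_m(u)T^{(r)}_{m+1}(u)$ ($0\le m\le\ell-1$); $T^{(r)}_m(u-1)T^{(r)}_m(u+1)=T^{(r)}_{m-1}(u)T^{(r)}_{m+1}(u)+T^{(r-1)}_{2m}(u)$ ($1\le m\le\ell-1$); with $T^{(0)}_m=T^{(a)}_0=1$, $T^{(a)}_{2\ell}=1$ ($a\le r-1$) on right sides, and $T^{(r)}_\ell(u)^2=1$, $T^{(r)}_\ell(u+1)=T^{(r)}_\ell(u)$.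 $\widehat{\mathcal{T}}_{2\ell}(A_{2r+1})$ is the commutative ring with generators $S^{(a)}_m(u)^{\pm1}$ ($1\le a\le2r+1$, $1\le m\le2\ell-1$, $u\in\frac12\mathbb{Z}$, excluding $a=r+1$ with $m$ odd), where one sets $S^{(r+1)}_m(u)=0$ for odd $m$, with relations: $S^{(a)}_m(u-\frac12)S^{(a)}_m(u+\frac12)=S^{(a)}_{m-1}(u)S^{(a)}_{m+1}(u)+S^{(a-1)}_m(u)S^{(a+1)}_m(u)$ for all $1\le a\le2r+1$, $1\le m\le2\ell-1$, $u\in\frac12\mathbb{Z}$; $S^{(a)}_m(u)=(-1)^mS^{(2r+2-a)}_m(u)$; and on right sides $S^{(a)}_0(u)=S^{(a)}_{2\ell}(u)=S^{(0)}_m(u)=1$, $S^{(2r+2)}_m(u)=(-1)^m$. *)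

theory Defs
  imports "HOL-Algebra.QuotRing"
begin

datatype 'g rexp = RGen 'g | RInv 'g | RZero | ROne
  | RAdd "'g rexp" "'g rexp" | RNeg "'g rexp" | RMul "'g rexp" "'g rexp"

inductive pcong :: "'g set \<Rightarrow> 'g set \<Rightarrow> ('g rexp \<times> 'g rexp) set \<Rightarrow> 'g rexp \<Rightarrow> 'g rexp \<Rightarrow> bool"
  for gens invs rels where
  rc_refl: "pcong gens invs rels e e"
| rc_sym: "pcong gens invs rels e f \<Longrightarrow> pcong gens invs rels f e"
| rc_trans: "pcong gens invs rels e f \<Longrightarrow> pcong gens invs rels f h \<Longrightarrow> pcong gens invs rels e h"
| rc_add: "pcong gens invs rels e e' \<Longrightarrow> pcong gens invs rels f f' \<Longrightarrow>
    pcong gens invs rels (RAdd e f) (RAdd e' f')"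
| rc_neg: "pcong gens invs rels e e' \<Longrightarrow> pcong gens invs rels (RNeg e) (RNeg e')"
| rc_mul: "pcong gens invs rels e e' \<Longrightarrow> pcong gens invs rels f f' \<Longrightarrow>
    pcong gens invs rels (RMul e f) (RMul e' f')"
| rc_add_assoc: "pcong gens invs rels (RAdd (RAdd e f) h) (RAdd e (RAdd f h))"
| rc_add_comm: "pcong gens invs rels (RAdd e f) (RAdd f e)"
| rc_add_zero: "pcong gens invs rels (RAdd RZero e) e"
| rc_add_neg: "pcong gens invs rels (RAdd (RNeg e) e) RZero"
| rc_mul_assoc: "pcong gens invs rels (RMul (RMul e f) h) (RMul e (RMul f h))"
| rc_mul_comm: "pcong gens invs rels (RMul e f) (RMul f e)"
| rc_mul_one: "pcong gens invs rels (RMul ROne e) e"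
| rc_distrib: "pcong gens invs rels (RMul e (RAdd f h)) (RAdd (RMul e f) (RMul e h))"
| rc_inv: "g \<in> invs \<Longrightarrow> pcong gens invs rels (RMul (RGen g) (RInv g)) ROne"
| rc_nongen: "g \<notin> gens \<Longrightarrow> pcong gens invs rels (RGen g) RZero"
| rc_noninv: "g \<notin> invs \<Longrightarrow> pcong gens invs rels (RInv g) RZero"
| rc_rel: "(e, f) \<in> rels \<Longrightarrow> pcong gens invs rels e f"

definition rclass :: "'g set \<Rightarrow> 'g set \<Rightarrow> ('g rexp \<times> 'g rexp) set \<Rightarrow> 'g rexp \<Rightarrow> 'g rexp set" where
  "rclass gens invs rels e = {f. pcong gens invs rels e f}"

definition rrep :: "'g rexp set \<Rightarrow> 'g rexp" where
  "rrep X = (SOME e. e \<in> X)"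

definition pres_ring :: "'g set \<Rightarrow> 'g set \<Rightarrow> ('g rexp \<times> 'g rexp) set \<Rightarrow> ('g rexp set) ring" where
  "pres_ring gens invs rels =
    \<lparr>carrier = range (rclass gens invs rels),
     mult = (\<lambda>X Y. rclass gens invs rels (RMul (rrep X) (rrep Y))),
     one = rclass gens invs rels ROne,
     zero = rclass gens invs rels RZero,
     add = (\<lambda>X Y. rclass gens invs rels (RAdd (rrep X) (rrep Y)))\<rparr>"

text \<open>Generators are triples \<open>(a, m, k)\<close> of integers standing for
\<open>T^(a)_m(u)\<close> with spectral parameter \<open>u = k/2 \<in> \<frac>12\<int>\<close>.\<close>

definition gens_T :: "int \<Rightarrow> int \<Rightarrow> (int \<times> int \<times> int) set" where
  "gens_T r l = {(a, m, k). (1 \<le> a \<and> a \<le> r - 1 \<and> 1 \<le> m \<and> m \<le> 2*l - 1)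
                          \<or> (a = r \<and> 1 \<le> m \<and> m \<le> l)}"

definition invs_T :: "int \<Rightarrow> int \<Rightarrow> (int \<times> int \<times> int) set" where
  "invs_T r l = {(a, m, k). (1 \<le> a \<and> a \<le> r - 1 \<and> 1 \<le> m \<and> m \<le> 2*l - 1)
                          \<or> (a = r \<and> 1 \<le> m \<and> m \<le> l - 1)}"

definition tT :: "int \<Rightarrow> int \<Rightarrow> int \<Rightarrow> int \<Rightarrow> int \<Rightarrow> (int \<times> int \<times> int) rexp" where
  "tT r l a m k = (if a = 0 \<or> m = 0 \<or> (a \<le> r - 1 \<and> m = 2*l) then ROne else RGen (a, m, k))"

definition rels_T :: "int \<Rightarrow> int \<Rightarrow> ((int \<times> int \<times> int) rexp \<times> (int \<times> int \<times> int) rexp) set" where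
  "rels_T r l =
     {(RMul (tT r l a m (k-1)) (tT r l a m (k+1)),
       RAdd (RMul (tT r l a (m-1) k) (tT r l a (m+1) k))
            (RMul (tT r l (a-1) m k) (tT r l (a+1) m k))) | a m k.
        1 \<le> a \<and> a \<le> r - 2 \<and> 1 \<le> m \<and> m \<le> 2*l - 1}
   \<union> {(RMul (tT r l (r-1) (2*m) (k-1)) (tT r l (r-1) (2*m) (k+1)),
       RAdd (RMul (tT r l (r-1) (2*m-1) k) (tT r l (r-1) (2*m+1) k))
            (RMul (tT r l (r-2) (2*m) k) (RMul (tT r l r m (k-1)) (tT r l r m (k+1))))) | m k.
        1 \<le> m \<and> m \<le> l - 1}
   \<union> {(RMul (tT r l (r-1) (2*m+1) (k-1)) (tT r l (r-1) (2*m+1) (k+1)),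
       RAdd (RMul (tT r l (r-1) (2*m) k) (tT r l (r-1) (2*m+2) k))
            (RMul (tT r l (r-2) (2*m+1) k) (RMul (tT r l r m k) (tT r l r (m+1) k)))) | m k.
        0 \<le> m \<and> m \<le> l - 1}
   \<union> {(RMul (tT r l r m (k-2)) (tT r l r m (k+2)),
       RAdd (RMul (tT r l r (m-1) k) (tT r l r (m+1) k)) (tT r l (r-1) (2*m) k)) | m k.
        1 \<le> m \<and> m \<le> l - 1}
   \<union> {(RMul (tT r l r l k) (tT r l r l k), ROne) | k. True}
   \<union> {(tT r l r l (k+2), tT r l r l k) | k. True}"

definition ring_T :: "int \<Rightarrow> int \<Rightarrow> ((int \<times> int \<times> int) rexp set) ring" where
  "ring_T r l = pres_ring (gens_T r l) (invs_T r l) (rels_T r l)"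

definition cls_T :: "int \<Rightarrow> int \<Rightarrow> (int \<times> int \<times> int) rexp \<Rightarrow> (int \<times> int \<times> int) rexp set" where
  "cls_T r l = rclass (gens_T r l) (invs_T r l) (rels_T r l)"

definition gens_S :: "int \<Rightarrow> int \<Rightarrow> (int \<times> int \<times> int) set" where
  "gens_S r l = {(a, m, k). 1 \<le> a \<and> a \<le> 2*r + 1 \<and> 1 \<le> m \<and> m \<le> 2*l - 1
                           \<and> \<not> (a = r + 1 \<and> odd m)}"

definition rsign :: "int \<Rightarrow> 'g rexp" where
  "rsign m = (if even m then ROne else RNeg ROne)"

definition sS :: "int \<Rightarrow> int \<Rightarrow> int \<Rightarrow> int \<Rightarrow> int \<Rightarrow> (int \<times> int \<times> int) rexp" where
  "sS r l a m k = (if a = 0 \<or> m = 0 \<or> m = 2*l then ROne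
                   else if a = 2*r + 2 then rsign m
                   else if a = r + 1 \<and> odd m then RZero
                   else RGen (a, m, k))"

definition rels_S :: "int \<Rightarrow> int \<Rightarrow> ((int \<times> int \<times> int) rexp \<times> (int \<times> int \<times> int) rexp) set" where
  "rels_S r l =
     {(RMul (sS r l a m (k-1)) (sS r l a m (k+1)),
       RAdd (RMul (sS r l a (m-1) k) (sS r l a (m+1) k))
            (RMul (sS r l (a-1) m k) (sS r l (a+1) m k))) | a m k.
        1 \<le> a \<and> a \<le> 2*r + 1 \<and> 1 \<le> m \<and> m \<le> 2*l - 1}
   \<union> {(sS r l a m k, RMul (rsign m) (sS r l (2*r + 2 - a) m k)) | a m k.
        1 \<le> a \<and> a \<le> 2*r + 1 \<and> 1 \<le> m \<and> m \<le> 2*l - 1}"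

definition ring_S :: "int \<Rightarrow> int \<Rightarrow> ((int \<times> int \<times> int) rexp set) ring" where
  "ring_S r l = pres_ring (gens_S r l) (gens_S r l) (rels_S r l)"

definition cls_S :: "int \<Rightarrow> int \<Rightarrow> (int \<times> int \<times> int) rexp \<Rightarrow> (int \<times> int \<times> int) rexp set" where
  "cls_S r l = rclass (gens_S r l) (gens_S r l) (rels_S r l)"

end

theory Submission
  imports Defs
begin

text \<open>Both rings are presented, so \<open>\<rho>\<close> is induced by a substitution of generators once it is
  checked to map relations to relations: for \<open>a < r\<close> they are relations of \<open>C_r\<close>, for
  \<open>a = r, r + 1\<close> they reduce to the \<open>T^(r)\<close>-relation or to trivialities (\<open>S^(r+1)_{odd} = 0\<close>),
  and for \<open>a \<ge> r + 2\<close> they are sign-twisted copies of those at \<open>2r + 2 - a\<close>.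
  The inverse \<open>\<sigma>\<close> keeps \<open>T^(a)_m = S^(a)_m\<close> for \<open>a < r\<close> and sends \<open>T^(r)_j\<close> to the alternating
  product \<open>P_j = S^(r)_{2j-1} (S^(r)_{2j-3})\<^sup>-\<^sup>1 S^(r)_{2j-5} \<cdots>\<close>. The \<open>A\<close>-relations at
  \<open>(r, 2j+1)\<close> and \<open>(r+1, 2j+1)\<close>, in which \<open>S^(r+1)_{2j+1} = 0\<close>, give by induction
  \<open>P_j(u - \<onehalf>) P_j(u + \<onehalf>) = S^(r)_{2j}(u)\<close> and \<open>P_j(u)\<^sup>2 = S^(r+1)_{2j}(u)\<close>; dividing the
  \<open>A\<close>-relation at \<open>(r, 2m)\<close> by \<open>P_m(u)\<^sup>2\<close> then yields the \<open>T^(r)\<close>-relation. Finally \<open>\<sigma> \<circ> \<rho>\<close> and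
  \<open>\<rho> \<circ> \<sigma>\<close> fix the generators.\<close>

section \<open>Presented commutative rings\<close>

lemma rclass_eq_iff: "rclass G I R e = rclass G I R f \<longleftrightarrow> pcong G I R e f"
proof
  assume "rclass G I R e = rclass G I R f"
  then have "f \<in> rclass G I R e" by (simp add: rclass_def rc_refl)
  then show "pcong G I R e f" by (simp add: rclass_def)
next
  assume "pcong G I R e f"
  then show "rclass G I R e = rclass G I R f"
    unfolding rclass_def by (auto intro: rc_trans rc_sym)
qed

lemma pcong_rrep_rclass: "pcong G I R e (rrep (rclass G I R e))"
proof -
  have "e \<in> rclass G I R e" by (simp add: rclass_def rc_refl)
  then have "rrep (rclass G I R e) \<in> rclass G I R e" unfolding rrep_def by (rule someI)
  then show ?thesis by (simp add: rclass_def)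
qed

lemma carrier_pres_ring: "carrier (pres_ring G I R) = range (rclass G I R)"
  by (simp add: pres_ring_def)

lemma rclass_in_carrier [simp]: "rclass G I R e \<in> carrier (pres_ring G I R)"
  by (simp add: carrier_pres_ring)

lemma rclass_ROne: "rclass G I R ROne = \<one>\<^bsub>pres_ring G I R\<^esub>"
  by (simp add: pres_ring_def)

lemma rclass_RZero: "rclass G I R RZero = \<zero>\<^bsub>pres_ring G I R\<^esub>"
  by (simp add: pres_ring_def)

lemma rclass_RMul: "rclass G I R (RMul e f) = rclass G I R e \<otimes>\<^bsub>pres_ring G I R\<^esub> rclass G I R f"
  by (simp add: pres_ring_def rclass_eq_iff rc_mul pcong_rrep_rclass)

lemma rclass_RAdd: "rclass G I R (RAdd e f) = rclass G I R e \<oplus>\<^bsub>pres_ring G I R\<^esub> rclass G I R f"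
  by (simp add: pres_ring_def rclass_eq_iff rc_add pcong_rrep_rclass)

lemma rclass_cring_laws:
  "rclass G I R (RAdd (RAdd e f) h) = rclass G I R (RAdd e (RAdd f h))"
  "rclass G I R (RAdd e f) = rclass G I R (RAdd f e)"
  "rclass G I R (RAdd RZero e) = rclass G I R e"
  "rclass G I R (RAdd (RNeg e) e) = rclass G I R RZero"
  "rclass G I R (RMul (RMul e f) h) = rclass G I R (RMul e (RMul f h))"
  "rclass G I R (RMul e f) = rclass G I R (RMul f e)"
  "rclass G I R (RMul ROne e) = rclass G I R e"
  "rclass G I R (RMul (RAdd e f) h) = rclass G I R (RAdd (RMul e h) (RMul f h))"
  unfolding rclass_eq_iff
  by (fact rc_add_assoc rc_add_comm rc_add_zero rc_add_neg rc_mul_assoc rc_mul_comm rc_mul_one)+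
    (meson rc_add rc_distrib rc_mul_comm rc_trans)

lemma cring_pres_ring: "cring (pres_ring G I R)"
proof (rule cringI)
  show "abelian_group (pres_ring G I R)"
  proof (rule abelian_groupI)
    fix x assume "x \<in> carrier (pres_ring G I R)"
    then obtain e where "x = rclass G I R e" by (auto simp: carrier_pres_ring)
    then show "\<exists>y\<in>carrier (pres_ring G I R). y \<oplus>\<^bsub>pres_ring G I R\<^esub> x = \<zero>\<^bsub>pres_ring G I R\<^esub>"
      by (intro bexI[of _ "rclass G I R (RNeg e)"])
        (simp_all flip: rclass_RAdd rclass_RZero add: rclass_cring_laws(4))
  qed (clarsimp simp: carrier_pres_ring simp flip: rclass_RAdd rclass_RZero; metis rclass_cring_laws)+
  show "comm_monoid (pres_ring G I R)"
    by (rule comm_monoidI)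
      (clarsimp simp: carrier_pres_ring simp flip: rclass_RMul rclass_ROne; metis rclass_cring_laws)+
qed (clarsimp simp: carrier_pres_ring simp flip: rclass_RMul rclass_RAdd; metis rclass_cring_laws(8))

lemma rclass_RNeg: "rclass G I R (RNeg e) = \<ominus>\<^bsub>pres_ring G I R\<^esub> rclass G I R e"
proof -
  interpret cring "pres_ring G I R" by (rule cring_pres_ring)
  show ?thesis
    by (rule minus_equality[symmetric])
      (simp_all flip: rclass_RAdd rclass_RZero add: rclass_cring_laws(4))
qed

lemmas rclass_ring_simps = rclass_RMul rclass_RAdd rclass_RNeg rclass_ROne rclass_RZero

lemma rclass_rel: "(e, f) \<in> R \<Longrightarrow> rclass G I R e = rclass G I R f"
  by (simp add: rclass_eq_iff rc_rel)

lemma rclass_RGen_RInv: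
  "g \<in> I \<Longrightarrow> rclass G I R (RGen g) \<otimes>\<^bsub>pres_ring G I R\<^esub> rclass G I R (RInv g) = \<one>\<^bsub>pres_ring G I R\<^esub>"
  by (simp flip: rclass_RMul rclass_ROne add: rclass_eq_iff rc_inv)

lemma rclass_rsign_even: "even m \<Longrightarrow> rclass G I R (rsign m) = \<one>\<^bsub>pres_ring G I R\<^esub>"
  by (simp add: rsign_def rclass_ring_simps)

lemma rclass_rsign_odd:
  "odd m \<Longrightarrow> rclass G I R (rsign m) = \<ominus>\<^bsub>pres_ring G I R\<^esub> \<one>\<^bsub>pres_ring G I R\<^esub>"
  by (simp add: rsign_def rclass_ring_simps)

lemma (in comm_monoid) mult_of_right_inverses:
  assumes "x \<otimes> u = \<one>" "y \<otimes> v = \<one>"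
    and "x \<in> carrier G" "y \<in> carrier G" "u \<in> carrier G" "v \<in> carrier G"
  shows "(x \<otimes> y) \<otimes> (u \<otimes> v) = \<one>"
proof -
  have "(x \<otimes> y) \<otimes> (u \<otimes> v) = (x \<otimes> u) \<otimes> (y \<otimes> v)"
    using assms(3-6) by (simp add: m_ac)
  then show ?thesis using assms(1,2) by simp
qed

section \<open>Homomorphisms induced by substitutions of generators\<close>

fun rsubst :: "('g \<Rightarrow> 'h rexp) \<Rightarrow> ('g \<Rightarrow> 'h rexp) \<Rightarrow> 'g rexp \<Rightarrow> 'h rexp" where
  "rsubst \<sigma> \<tau> (RGen g) = \<sigma> g"
| "rsubst \<sigma> \<tau> (RInv g) = \<tau> g"
| "rsubst \<sigma> \<tau> RZero = RZero"
| "rsubst \<sigma> \<tau> ROne = ROne"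
| "rsubst \<sigma> \<tau> (RAdd e f) = RAdd (rsubst \<sigma> \<tau> e) (rsubst \<sigma> \<tau> f)"
| "rsubst \<sigma> \<tau> (RNeg e) = RNeg (rsubst \<sigma> \<tau> e)"
| "rsubst \<sigma> \<tau> (RMul e f) = RMul (rsubst \<sigma> \<tau> e) (rsubst \<sigma> \<tau> f)"

lemma rsubst_rsign [simp]: "rsubst \<sigma> \<tau> (rsign m) = rsign m"
  by (simp add: rsign_def)

text \<open>\<open>\<sigma> g\<close> and \<open>\<tau> g\<close> are the images of the generator \<open>g\<close> and of its formal inverse.\<close>

locale presentation_map =
  fixes G :: "'g set" and I :: "'g set" and R :: "('g rexp \<times> 'g rexp) set"
    and G' :: "'h set" and I' :: "'h set" and R' :: "('h rexp \<times> 'h rexp) set"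
    and \<sigma> :: "'g \<Rightarrow> 'h rexp" and \<tau> :: "'g \<Rightarrow> 'h rexp"
  assumes map_inv: "g \<in> I \<Longrightarrow>
      rclass G' I' R' (\<sigma> g) \<otimes>\<^bsub>pres_ring G' I' R'\<^esub> rclass G' I' R' (\<tau> g) = \<one>\<^bsub>pres_ring G' I' R'\<^esub>"
    and map_nongen: "g \<notin> G \<Longrightarrow> rclass G' I' R' (\<sigma> g) = \<zero>\<^bsub>pres_ring G' I' R'\<^esub>"
    and map_noninv: "g \<notin> I \<Longrightarrow> rclass G' I' R' (\<tau> g) = \<zero>\<^bsub>pres_ring G' I' R'\<^esub>"
    and map_rel: "(e, f) \<in> R \<Longrightarrow> rclass G' I' R' (rsubst \<sigma> \<tau> e) = rclass G' I' R' (rsubst \<sigma> \<tau> f)"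
begin

lemma pcong_rsubst: "pcong G I R e f \<Longrightarrow> pcong G' I' R' (rsubst \<sigma> \<tau> e) (rsubst \<sigma> \<tau> f)"
proof (induction rule: pcong.induct)
  case (rc_inv g)
  then show ?case using map_inv by (simp flip: rclass_eq_iff rclass_RMul rclass_ROne)
next
  case (rc_nongen g)
  then show ?case using map_nongen by (simp flip: rclass_eq_iff rclass_RZero)
next
  case (rc_noninv g)
  then show ?case using map_noninv by (simp flip: rclass_eq_iff rclass_RZero)
next
  case (rc_rel e f)
  then show ?case using map_rel by (simp flip: rclass_eq_iff)
qed (auto intro: pcong.intros)

definition induced :: "'g rexp set \<Rightarrow> 'h rexp set" where
  "induced X = rclass G' I' R' (rsubst \<sigma> \<tau> (rrep X))"

lemma induced_rclass: "induced (rclass G I R e) = rclass G' I' R' (rsubst \<sigma> \<tau> e)"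
  unfolding induced_def rclass_eq_iff
  by (rule rc_sym, rule pcong_rsubst, rule pcong_rrep_rclass)

lemma induced_ring_hom: "induced \<in> ring_hom (pres_ring G I R) (pres_ring G' I' R')"
proof (rule ring_hom_memI)
  fix x y assume "x \<in> carrier (pres_ring G I R)" "y \<in> carrier (pres_ring G I R)"
  then obtain e f where "x = rclass G I R e" "y = rclass G I R f" by (auto simp: carrier_pres_ring)
  then show "induced (x \<otimes>\<^bsub>pres_ring G I R\<^esub> y) = induced x \<otimes>\<^bsub>pres_ring G' I' R'\<^esub> induced y"
    and "induced (x \<oplus>\<^bsub>pres_ring G I R\<^esub> y) = induced x \<oplus>\<^bsub>pres_ring G' I' R'\<^esub> induced y"
    by (simp_all flip: rclass_RMul rclass_RAdd add: induced_rclass)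
qed (auto simp: carrier_pres_ring induced_rclass simp flip: rclass_ROne)

end

text \<open>The composite of two compatible substitutions is the identity on classes as soon as it
  fixes the generators: inverses of generators are then fixed by uniqueness of inverses.\<close>

lemma rclass_rsubst_rsubst:
  assumes fw: "presentation_map G I R G' I' R' \<sigma> \<tau>"
    and bw: "presentation_map G' I' R' G I R \<sigma>' \<tau>'"
    and gen: "\<And>g. g \<in> G \<Longrightarrow> rclass G I R (rsubst \<sigma>' \<tau>' (\<sigma> g)) = rclass G I R (RGen g)"
  shows "rclass G I R (rsubst \<sigma>' \<tau>' (rsubst \<sigma> \<tau> e)) = rclass G I R e"
proof -
  interpret fw: presentation_map G I R G' I' R' \<sigma> \<tau> by (fact fw)
  interpret bw: presentation_map G' I' R' G I R \<sigma>' \<tau>' by (fact bw)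
  interpret cring "pres_ring G I R" by (rule cring_pres_ring)
  let ?rt = "\<lambda>e. rclass G I R (rsubst \<sigma>' \<tau>' (rsubst \<sigma> \<tau> e))"
  have rt_pcong: "?rt e = ?rt f" if "pcong G I R e f" for e f
    using bw.pcong_rsubst[OF fw.pcong_rsubst[OF that]] by (simp add: rclass_eq_iff)
  have rt_zero: "?rt e = \<zero>\<^bsub>pres_ring G I R\<^esub>"
    if "rclass G' I' R' (rsubst \<sigma> \<tau> e) = \<zero>\<^bsub>pres_ring G' I' R'\<^esub>" for e
    using that bw.pcong_rsubst[of _ RZero] by (simp flip: rclass_RZero add: rclass_eq_iff)
  have rt_gen: "rclass G I R (rsubst \<sigma>' \<tau>' (\<sigma> g)) = rclass G I R (RGen g)" for g
  proof (cases "g \<in> G")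
    case False
    then have "rclass G I R (RGen g) = \<zero>\<^bsub>pres_ring G I R\<^esub>"
      by (simp flip: rclass_RZero add: rclass_eq_iff rc_nongen)
    with False show ?thesis using rt_zero[of "RGen g"] fw.map_nongen by simp
  qed (simp add: gen)
  show ?thesis
  proof (induction e)
    case (RInv g)
    show ?case
    proof (cases "g \<in> I")
      case True
      have "?rt (RInv g) \<otimes>\<^bsub>pres_ring G I R\<^esub> rclass G I R (RGen g) = \<one>\<^bsub>pres_ring G I R\<^esub>"
      proof -
        have "pcong G I R (RMul (RInv g) (RGen g)) ROne"
          using True by (meson rc_inv rc_mul_comm rc_trans)
        from rt_pcong[OF this] show ?thesis by (simp add: rclass_ring_simps rt_gen)
      qed
      with True show ?thesis
        by (intro inv_unique[OF _ rclass_RGen_RInv]) simp_all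
    next
      case False
      then have "rclass G I R (RInv g) = \<zero>\<^bsub>pres_ring G I R\<^esub>"
        by (simp flip: rclass_RZero add: rclass_eq_iff rc_noninv)
      with False show ?thesis using rt_zero[of "RInv g"] fw.map_noninv by simp
    qed
  qed (simp_all add: rt_gen rclass_ring_simps)
qed

lemma induced_ring_iso:
  assumes fw: "presentation_map G I R G' I' R' \<sigma> \<tau>"
    and bw: "presentation_map G' I' R' G I R \<sigma>' \<tau>'"
    and bw_fw: "\<And>g. g \<in> G \<Longrightarrow> rclass G I R (rsubst \<sigma>' \<tau>' (\<sigma> g)) = rclass G I R (RGen g)"
    and fw_bw: "\<And>g. g \<in> G' \<Longrightarrow> rclass G' I' R' (rsubst \<sigma> \<tau> (\<sigma>' g)) = rclass G' I' R' (RGen g)"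
  shows "presentation_map.induced G' I' R' \<sigma> \<tau> \<in> ring_iso (pres_ring G I R) (pres_ring G' I' R')"
proof -
  interpret fw: presentation_map G I R G' I' R' \<sigma> \<tau> by (fact fw)
  have "inj_on fw.induced (carrier (pres_ring G I R))"
  proof (rule inj_onI)
    fix x y assume x: "x \<in> carrier (pres_ring G I R)" and y: "y \<in> carrier (pres_ring G I R)"
      and "fw.induced x = fw.induced y"
    moreover obtain e f where xy: "x = rclass G I R e" "y = rclass G I R f"
      using x y by (auto simp: carrier_pres_ring)
    ultimately have "pcong G' I' R' (rsubst \<sigma> \<tau> e) (rsubst \<sigma> \<tau> f)"
      by (simp add: fw.induced_rclass flip: rclass_eq_iff)
    then have "rclass G I R (rsubst \<sigma>' \<tau>' (rsubst \<sigma> \<tau> e))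
        = rclass G I R (rsubst \<sigma>' \<tau>' (rsubst \<sigma> \<tau> f))"
      by (simp only: rclass_eq_iff presentation_map.pcong_rsubst[OF bw])
    then show "x = y"
      unfolding xy by (simp only: rclass_rsubst_rsubst[OF fw bw bw_fw])
  qed
  moreover have "fw.induced ` carrier (pres_ring G I R) = carrier (pres_ring G' I' R')"
  proof
    show "carrier (pres_ring G' I' R') \<subseteq> fw.induced ` carrier (pres_ring G I R)"
    proof
      fix y assume "y \<in> carrier (pres_ring G' I' R')"
      then obtain e where "y = rclass G' I' R' e" by (auto simp: carrier_pres_ring)
      then have "y = fw.induced (rclass G I R (rsubst \<sigma>' \<tau>' e))"
        by (simp add: fw.induced_rclass rclass_rsubst_rsubst[OF bw fw fw_bw])
      then show "y \<in> fw.induced ` carrier (pres_ring G I R)" by simp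
    qed
  qed (auto simp: carrier_pres_ring fw.induced_rclass)
  ultimately show ?thesis
    using fw.induced_ring_hom by (simp add: ring_iso_def bij_betw_def)
qed

section \<open>The isomorphism \<open>T^_{2l}(A_{2r+1}) \<cong> T~_l(C_r)\<close>\<close>

text \<open>\<open>T^(r)_l\<close> is its own inverse.\<close>

definition tT_inv :: "int \<Rightarrow> int \<Rightarrow> int \<Rightarrow> int \<Rightarrow> (int \<times> int \<times> int) rexp" where
  "tT_inv r l j k = (if j = 0 then ROne else if j = l then RGen (r, l, k) else RInv (r, j, k))"

definition rho_gen_low :: "int \<Rightarrow> int \<Rightarrow> int \<Rightarrow> int \<Rightarrow> int \<Rightarrow> (int \<times> int \<times> int) rexp" where
  "rho_gen_low r l a m k = (if a \<le> r - 1 then tT r l a m k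
     else if a = r then (if even m then RMul (tT r l r (m div 2) (k-1)) (tT r l r (m div 2) (k+1))
                         else RMul (tT r l r ((m-1) div 2) k) (tT r l r ((m+1) div 2) k))
     else RMul (tT r l r (m div 2) k) (tT r l r (m div 2) k))"

definition rho_inv_low :: "int \<Rightarrow> int \<Rightarrow> int \<Rightarrow> int \<Rightarrow> int \<Rightarrow> (int \<times> int \<times> int) rexp" where
  "rho_inv_low r l a m k = (if a \<le> r - 1 then RInv (a, m, k)
     else if a = r then (if even m then RMul (tT_inv r l (m div 2) (k-1)) (tT_inv r l (m div 2) (k+1))
                         else RMul (tT_inv r l ((m-1) div 2) k) (tT_inv r l ((m+1) div 2) k))
     else RMul (tT_inv r l (m div 2) k) (tT_inv r l (m div 2) k))"

definition rho_gen :: "int \<Rightarrow> int \<Rightarrow> int \<times> int \<times> int \<Rightarrow> (int \<times> int \<times> int) rexp" where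
  "rho_gen r l g = (case g of (a, m, k) \<Rightarrow> if (a, m, k) \<in> gens_S r l then
      (if a \<le> r + 1 then rho_gen_low r l a m k
       else RMul (rsign m) (rho_gen_low r l (2*r+2-a) m k)) else RZero)"

definition rho_inv :: "int \<Rightarrow> int \<Rightarrow> int \<times> int \<times> int \<Rightarrow> (int \<times> int \<times> int) rexp" where
  "rho_inv r l g = (case g of (a, m, k) \<Rightarrow> if (a, m, k) \<in> gens_S r l then
      (if a \<le> r + 1 then rho_inv_low r l a m k
       else RMul (rsign m) (rho_inv_low r l (2*r+2-a) m k)) else RZero)"

text \<open>\<open>preim_Tr r j k\<close> is the alternating product \<open>P_j(k/2)\<close>, which telescopes under
  \<open>S^(r)_{2i+1} \<mapsto> T^(r)_i T^(r)_{i+1}\<close>.\<close>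

fun preim_Tr :: "int \<Rightarrow> nat \<Rightarrow> int \<Rightarrow> (int \<times> int \<times> int) rexp"
and preim_Tr_inv :: "int \<Rightarrow> nat \<Rightarrow> int \<Rightarrow> (int \<times> int \<times> int) rexp" where
  "preim_Tr r 0 k = ROne"
| "preim_Tr r (Suc j) k = RMul (RGen (r, 2 * int j + 1, k)) (preim_Tr_inv r j k)"
| "preim_Tr_inv r 0 k = ROne"
| "preim_Tr_inv r (Suc j) k = RMul (RInv (r, 2 * int j + 1, k)) (preim_Tr r j k)"

definition sigma_gen :: "int \<Rightarrow> int \<Rightarrow> int \<times> int \<times> int \<Rightarrow> (int \<times> int \<times> int) rexp" where
  "sigma_gen r l g = (case g of (a, m, k) \<Rightarrow> if (a, m, k) \<in> gens_T r l then
      (if a = r then preim_Tr r (nat m) k else RGen (a, m, k)) else RZero)"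

definition sigma_inv :: "int \<Rightarrow> int \<Rightarrow> int \<times> int \<times> int \<Rightarrow> (int \<times> int \<times> int) rexp" where
  "sigma_inv r l g = (case g of (a, m, k) \<Rightarrow> if (a, m, k) \<in> invs_T r l then
      (if a = r then preim_Tr_inv r (nat m) k else RInv (a, m, k)) else RZero)"

lemma gens_S_iff:
  "(a, m, k) \<in> gens_S r l \<longleftrightarrow> 1 \<le> a \<and> a \<le> 2*r+1 \<and> 1 \<le> m \<and> m \<le> 2*l-1 \<and> \<not> (a = r+1 \<and> odd m)"
  by (simp add: gens_S_def)

lemma sS_gen:
  "1 \<le> a \<Longrightarrow> a \<le> 2*r+1 \<Longrightarrow> 1 \<le> m \<Longrightarrow> m \<le> 2*l-1 \<Longrightarrow> \<not> (a = r+1 \<and> odd m) \<Longrightarrow>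
   sS r l a m k = RGen (a, m, k)"
  by (simp add: sS_def)

lemma even_odd_cases: obtains j where "m = 2*j" | j where "m = (2*j+1::int)"
  by (metis oddE evenE)

lemma int_halves:
  "(2*j) div 2 = (j::int)" "(2*j+1-1) div 2 = j" "(2*j+1+1) div 2 = j + 1"
  by auto

locale tsystem_CA =
  fixes r l :: int
  assumes r_ge_2: "2 \<le> r" and l_ge_2: "2 \<le> l"
begin

abbreviation "RT \<equiv> pres_ring (gens_T r l) (invs_T r l) (rels_T r l)"
abbreviation "clT \<equiv> rclass (gens_T r l) (invs_T r l) (rels_T r l)"
abbreviation "RS \<equiv> pres_ring (gens_S r l) (gens_S r l) (rels_S r l)"
abbreviation "clS \<equiv> rclass (gens_S r l) (gens_S r l) (rels_S r l)"

sublocale T: cring RT by (rule cring_pres_ring)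
sublocale S: cring RS by (rule cring_pres_ring)

abbreviation "Tc a m k \<equiv> clT (tT r l a m k)"
abbreviation "Tc_inv j k \<equiv> clT (tT_inv r l j k)"
abbreviation "Sc a m k \<equiv> clS (sS r l a m k)"
abbreviation "rho_subst \<equiv> rsubst (rho_gen r l) (rho_inv r l)"
abbreviation "sigma_subst \<equiv> rsubst (sigma_gen r l) (sigma_inv r l)"
abbreviation "rhoS a m k \<equiv> clT (rho_subst (sS r l a m k))"
abbreviation "sigmaT a m k \<equiv> clS (sigma_subst (tT r l a m k))"
abbreviation "Pc j k \<equiv> clS (preim_Tr r (nat j) k)"
abbreviation "Pc_inv j k \<equiv> clS (preim_Tr_inv r (nat j) k)"

lemma clT_in_carrier: "clT e \<in> carrier RT" by simp
lemma clS_in_carrier: "clS e \<in> carrier RS" by simp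

lemma clT_rsign_square: "clT (rsign m) \<otimes>\<^bsub>RT\<^esub> clT (rsign m) = \<one>\<^bsub>RT\<^esub>"
  by (cases "even m") (simp_all add: rclass_rsign_even rclass_rsign_odd T.l_minus)

lemma Tc_trivial: "a = 0 \<or> m = 0 \<or> (a \<le> r - 1 \<and> m = 2*l) \<Longrightarrow> Tc a m k = \<one>\<^bsub>RT\<^esub>"
  by (simp add: tT_def rclass_ring_simps)

lemma tT_gen: "\<not> (a = 0 \<or> m = 0 \<or> (a \<le> r - 1 \<and> m = 2*l)) \<Longrightarrow> tT r l a m k = RGen (a, m, k)"
  by (simp add: tT_def)

lemma T_rel_bulk:
  assumes "1 \<le> a" "a \<le> r - 2" "1 \<le> m" "m \<le> 2*l - 1"
  shows "Tc a m (k-1) \<otimes>\<^bsub>RT\<^esub> Tc a m (k+1)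
    = Tc a (m-1) k \<otimes>\<^bsub>RT\<^esub> Tc a (m+1) k \<oplus>\<^bsub>RT\<^esub> Tc (a-1) m k \<otimes>\<^bsub>RT\<^esub> Tc (a+1) m k"
proof -
  have "(RMul (tT r l a m (k-1)) (tT r l a m (k+1)),
       RAdd (RMul (tT r l a (m-1) k) (tT r l a (m+1) k))
            (RMul (tT r l (a-1) m k) (tT r l (a+1) m k))) \<in> rels_T r l"
    unfolding rels_T_def using assms by blast
  from rclass_rel[OF this] show ?thesis by (simp add: rclass_ring_simps)
qed

lemma T_rel_r_minus_1_even:
  assumes "1 \<le> m" "m \<le> l - 1"
  shows "Tc (r-1) (2*m) (k-1) \<otimes>\<^bsub>RT\<^esub> Tc (r-1) (2*m) (k+1)
    = Tc (r-1) (2*m-1) k \<otimes>\<^bsub>RT\<^esub> Tc (r-1) (2*m+1) k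
      \<oplus>\<^bsub>RT\<^esub> Tc (r-2) (2*m) k \<otimes>\<^bsub>RT\<^esub> (Tc r m (k-1) \<otimes>\<^bsub>RT\<^esub> Tc r m (k+1))"
proof -
  have "(RMul (tT r l (r-1) (2*m) (k-1)) (tT r l (r-1) (2*m) (k+1)),
       RAdd (RMul (tT r l (r-1) (2*m-1) k) (tT r l (r-1) (2*m+1) k))
            (RMul (tT r l (r-2) (2*m) k) (RMul (tT r l r m (k-1)) (tT r l r m (k+1)))))
      \<in> rels_T r l"
    unfolding rels_T_def using assms by blast
  from rclass_rel[OF this] show ?thesis by (simp add: rclass_ring_simps)
qed

lemma T_rel_r_minus_1_odd:
  assumes "0 \<le> m" "m \<le> l - 1"
  shows "Tc (r-1) (2*m+1) (k-1) \<otimes>\<^bsub>RT\<^esub> Tc (r-1) (2*m+1) (k+1)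
    = Tc (r-1) (2*m) k \<otimes>\<^bsub>RT\<^esub> Tc (r-1) (2*m+2) k
      \<oplus>\<^bsub>RT\<^esub> Tc (r-2) (2*m+1) k \<otimes>\<^bsub>RT\<^esub> (Tc r m k \<otimes>\<^bsub>RT\<^esub> Tc r (m+1) k)"
proof -
  have "(RMul (tT r l (r-1) (2*m+1) (k-1)) (tT r l (r-1) (2*m+1) (k+1)),
       RAdd (RMul (tT r l (r-1) (2*m) k) (tT r l (r-1) (2*m+2) k))
            (RMul (tT r l (r-2) (2*m+1) k) (RMul (tT r l r m k) (tT r l r (m+1) k))))
      \<in> rels_T r l"
    unfolding rels_T_def using assms by blast
  from rclass_rel[OF this] show ?thesis by (simp add: rclass_ring_simps)
qed

lemma T_rel_r:
  assumes "1 \<le> m" "m \<le> l - 1"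
  shows "Tc r m (k-2) \<otimes>\<^bsub>RT\<^esub> Tc r m (k+2)
    = Tc r (m-1) k \<otimes>\<^bsub>RT\<^esub> Tc r (m+1) k \<oplus>\<^bsub>RT\<^esub> Tc (r-1) (2*m) k"
proof -
  have "(RMul (tT r l r m (k-2)) (tT r l r m (k+2)),
       RAdd (RMul (tT r l r (m-1) k) (tT r l r (m+1) k)) (tT r l (r-1) (2*m) k)) \<in> rels_T r l"
    unfolding rels_T_def using assms by blast
  from rclass_rel[OF this] show ?thesis by (simp add: rclass_ring_simps)
qed

lemma T_rel_l_square: "Tc r l k \<otimes>\<^bsub>RT\<^esub> Tc r l k = \<one>\<^bsub>RT\<^esub>"
proof -
  have "(RMul (tT r l r l k) (tT r l r l k), ROne) \<in> rels_T r l"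
    unfolding rels_T_def by blast
  from rclass_rel[OF this] show ?thesis by (simp add: rclass_ring_simps)
qed

lemma T_rel_l_periodic: "Tc r l (k+2) = Tc r l k"
  by (rule rclass_rel) (auto simp: rels_T_def)

lemma Tc_l_shift_product: "Tc r l (k-1) \<otimes>\<^bsub>RT\<^esub> Tc r l (k+1) = \<one>\<^bsub>RT\<^esub>"
  using T_rel_l_periodic[of "k-1"] T_rel_l_square[of "k-1"] by (simp add: add.commute)

lemma Tc_Tc_inv: "0 \<le> j \<Longrightarrow> j \<le> l \<Longrightarrow> Tc r j k \<otimes>\<^bsub>RT\<^esub> Tc_inv j k = \<one>\<^bsub>RT\<^esub>"
proof -
  assume j: "0 \<le> j" "j \<le> l"
  consider "j = 0" | "j = l" | "1 \<le> j" "j \<le> l - 1" using j by linarith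
  then show ?thesis
  proof cases
    case 1 then show ?thesis by (simp add: tT_inv_def tT_def rclass_ring_simps)
  next
    case 2 then show ?thesis using T_rel_l_square[of k] r_ge_2 l_ge_2 by (simp add: tT_inv_def tT_def)
  next
    case 3
    then have "(r, j, k) \<in> invs_T r l" by (simp add: invs_T_def)
    from rclass_RGen_RInv[OF this] show ?thesis using 3 r_ge_2 by (simp add: tT_inv_def tT_def)
  qed
qed

lemma rhoS_trivial: "a = 0 \<or> m = 0 \<or> m = 2*l \<Longrightarrow> rhoS a m k = \<one>\<^bsub>RT\<^esub>"
  by (simp add: sS_def rclass_ring_simps)

lemma rhoS_gen:
  "1 \<le> a \<Longrightarrow> a \<le> 2*r+1 \<Longrightarrow> 1 \<le> m \<Longrightarrow> m \<le> 2*l-1 \<Longrightarrow> \<not> (a = r+1 \<and> odd m) \<Longrightarrow>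
   rhoS a m k = clT (if a \<le> r + 1 then rho_gen_low r l a m k
                    else RMul (rsign m) (rho_gen_low r l (2*r+2-a) m k))"
  by (simp add: sS_gen rho_gen_def gens_S_iff)

lemma rhoS_low: "0 \<le> a \<Longrightarrow> a \<le> r-1 \<Longrightarrow> 0 \<le> m \<Longrightarrow> m \<le> 2*l \<Longrightarrow> rhoS a m k = Tc a m k"
  by (cases "a = 0 \<or> m = 0 \<or> m = 2*l")
    (auto simp: rhoS_trivial Tc_trivial rhoS_gen rho_gen_low_def)

lemma rhoS_r_even: "0 \<le> j \<Longrightarrow> j \<le> l \<Longrightarrow> rhoS r (2*j) k = Tc r j (k-1) \<otimes>\<^bsub>RT\<^esub> Tc r j (k+1)"
proof -
  assume j: "0 \<le> j" "j \<le> l"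
  consider "j = 0" | "j = l" | "1 \<le> j" "j \<le> l - 1" using j by linarith
  then show ?thesis
  proof cases
    case 1 then show ?thesis by (simp add: rhoS_trivial Tc_trivial)
  next
    case 2 then show ?thesis by (simp add: rhoS_trivial Tc_l_shift_product)
  next
    case 3 then show ?thesis
      using r_ge_2 by (subst rhoS_gen) (auto simp: rho_gen_low_def rclass_ring_simps int_halves)
  qed
qed

lemma rhoS_r_odd: "0 \<le> j \<Longrightarrow> j \<le> l - 1 \<Longrightarrow> rhoS r (2*j+1) k = Tc r j k \<otimes>\<^bsub>RT\<^esub> Tc r (j+1) k"
  using r_ge_2 by (subst rhoS_gen) (auto simp: rho_gen_low_def rclass_ring_simps int_halves add.commute)

lemma rhoS_r_plus_1_even: "0 \<le> j \<Longrightarrow> j \<le> l \<Longrightarrow> rhoS (r+1) (2*j) k = Tc r j k \<otimes>\<^bsub>RT\<^esub> Tc r j k"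
proof -
  assume j: "0 \<le> j" "j \<le> l"
  consider "j = 0" | "j = l" | "1 \<le> j" "j \<le> l - 1" using j by linarith
  then show ?thesis
  proof cases
    case 1 then show ?thesis by (simp add: rhoS_trivial Tc_trivial)
  next
    case 2 then show ?thesis by (simp add: rhoS_trivial T_rel_l_square)
  next
    case 3 then show ?thesis
      using r_ge_2 by (subst rhoS_gen) (auto simp: rho_gen_low_def rclass_ring_simps int_halves)
  qed
qed

lemma rhoS_r_plus_1_odd: "odd m \<Longrightarrow> 1 \<le> m \<Longrightarrow> m \<le> 2*l-1 \<Longrightarrow> rhoS (r+1) m k = \<zero>\<^bsub>RT\<^esub>"
  using r_ge_2 by (simp add: sS_def rclass_ring_simps)

lemma rhoS_mirror_high:
  assumes "r+2 \<le> a" "a \<le> 2*r+2" "0 \<le> m" "m \<le> 2*l"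
  shows "rhoS a m k = clT (rsign m) \<otimes>\<^bsub>RT\<^esub> rhoS (2*r+2-a) m k"
proof -
  consider "m = 0 \<or> m = 2*l" | "\<not> (m = 0 \<or> m = 2*l)" "a = 2*r+2"
    | "\<not> (m = 0 \<or> m = 2*l)" "a \<le> 2*r+1"
    using assms by linarith
  then show ?thesis
  proof cases
    case 1 then show ?thesis by (auto simp: rhoS_trivial rclass_rsign_even)
  next
    case 2 then show ?thesis using assms r_ge_2 by (simp add: rhoS_trivial) (simp add: sS_def)
  next
    case 3
    then have "rhoS a m k = clT (RMul (rsign m) (rho_gen_low r l (2*r+2-a) m k))"
      and "rhoS (2*r+2-a) m k = clT (rho_gen_low r l (2*r+2-a) m k)"
      using assms by (subst rhoS_gen; auto)+
    then show ?thesis by (simp add: rclass_ring_simps)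
  qed
qed

lemma rhoS_mirror:
  assumes "0 \<le> a" "a \<le> 2*r+2" "0 \<le> m" "m \<le> 2*l"
  shows "rhoS a m k = clT (rsign m) \<otimes>\<^bsub>RT\<^esub> rhoS (2*r+2-a) m k"
proof -
  consider "r+2 \<le> a" | "a = r+1" | "a \<le> r" using assms by linarith
  then show ?thesis
  proof cases
    case 1 then show ?thesis using assms rhoS_mirror_high by blast
  next
    case 2
    show ?thesis
    proof (cases "even m")
      case False
      then have "m \<noteq> 0" "m \<noteq> 2*l" by auto
      then have "1 \<le> m" "m \<le> 2*l - 1" using assms by auto
      with 2 False show ?thesis by (simp add: rhoS_r_plus_1_odd)
    qed (simp add: 2 rclass_rsign_even)
  next
    case 3
    have "rhoS (2*r+2-a) m k = clT (rsign m) \<otimes>\<^bsub>RT\<^esub> rhoS a m k"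
      using rhoS_mirror_high[of "2*r+2-a" m k] 3 assms by simp
    then show ?thesis
      by (cases "even m")
        (simp_all add: rclass_rsign_even rclass_rsign_odd T.l_minus T.minus_equality)
  qed
qed

lemma rhoS_rel_r_minus_1:
  assumes "1 \<le> m" "m \<le> 2*l-1"
  shows "rhoS (r-1) m (k-1) \<otimes>\<^bsub>RT\<^esub> rhoS (r-1) m (k+1)
    = rhoS (r-1) (m-1) k \<otimes>\<^bsub>RT\<^esub> rhoS (r-1) (m+1) k \<oplus>\<^bsub>RT\<^esub> rhoS (r-2) m k \<otimes>\<^bsub>RT\<^esub> rhoS r m k"
proof (cases rule: even_odd_cases[of m])
  case (1 j)
  then have "1 \<le> j" "j \<le> l - 1" using assms by auto
  then show ?thesis using 1 r_ge_2 T_rel_r_minus_1_even[of j k] by (simp add: rhoS_low rhoS_r_even)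
next
  case (2 j)
  then have "0 \<le> j" "j \<le> l - 1" using assms by auto
  then show ?thesis using 2 r_ge_2 T_rel_r_minus_1_odd[of j k] rhoS_r_odd[of j k]
    by (simp add: rhoS_low add.commute)
qed

lemma rhoS_rel_r:
  assumes "1 \<le> m" "m \<le> 2*l-1"
  shows "rhoS r m (k-1) \<otimes>\<^bsub>RT\<^esub> rhoS r m (k+1)
    = rhoS r (m-1) k \<otimes>\<^bsub>RT\<^esub> rhoS r (m+1) k \<oplus>\<^bsub>RT\<^esub> rhoS (r-1) m k \<otimes>\<^bsub>RT\<^esub> rhoS (r+1) m k"
proof (cases rule: even_odd_cases[of m])
  case (1 j)
  then have j: "1 \<le> j" "j \<le> l - 1" using assms by auto
  have "rhoS r (2*j) (k-1) = Tc r j (k-2) \<otimes>\<^bsub>RT\<^esub> Tc r j k"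
    and "rhoS r (2*j) (k+1) = Tc r j k \<otimes>\<^bsub>RT\<^esub> Tc r j (k+2)"
    and "rhoS r (2*j-1) k = Tc r (j-1) k \<otimes>\<^bsub>RT\<^esub> Tc r j k"
    using j rhoS_r_even[of j "k-1"] rhoS_r_even[of j "k+1"] rhoS_r_odd[of "j-1" k]
    by (simp_all add: algebra_simps)
  moreover have "rhoS (r-1) (2*j) k = Tc (r-1) (2*j) k" using j r_ge_2 by (simp add: rhoS_low)
  moreover note rhoS_r_odd[of j k] rhoS_r_plus_1_even[of j k]
  \<comment> \<open>both sides are \<open>(T^(r)_j(u))\<^sup>2\<close> times the two sides of the \<open>T^(r)\<close> relation\<close>
  ultimately show ?thesis
    using 1 j T_rel_r[OF j, of k]
    by simp (insert clT_in_carrier, algebra)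
next
  case (2 j)
  then have j: "0 \<le> j" "j \<le> l - 1" using assms by auto
  have "rhoS r (2*j+1-1) k = Tc r j (k-1) \<otimes>\<^bsub>RT\<^esub> Tc r j (k+1)"
    and "rhoS r (2*j+1+1) k = Tc r (j+1) (k-1) \<otimes>\<^bsub>RT\<^esub> Tc r (j+1) (k+1)"
    and "rhoS (r+1) (2*j+1) k = \<zero>\<^bsub>RT\<^esub>"
    using j rhoS_r_even[of j k] rhoS_r_even[of "j+1" k] rhoS_r_plus_1_odd[of "2*j+1" k]
    by (simp_all add: algebra_simps)
  then show ?thesis
    using 2 j rhoS_r_odd[of j] by simp (insert clT_in_carrier, algebra)
qed

lemma rhoS_rel_r_plus_1:
  assumes "1 \<le> m" "m \<le> 2*l-1"
  shows "rhoS (r+1) m (k-1) \<otimes>\<^bsub>RT\<^esub> rhoS (r+1) m (k+1)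
    = rhoS (r+1) (m-1) k \<otimes>\<^bsub>RT\<^esub> rhoS (r+1) (m+1) k \<oplus>\<^bsub>RT\<^esub> rhoS r m k \<otimes>\<^bsub>RT\<^esub> rhoS (r+2) m k"
proof (cases rule: even_odd_cases[of m])
  case (1 j)
  then have j: "1 \<le> j" "j \<le> l - 1" using assms by auto
  have "rhoS (r+1) (2*j-1) k = \<zero>\<^bsub>RT\<^esub>" "rhoS (r+1) (2*j+1) k = \<zero>\<^bsub>RT\<^esub>"
    using j by (intro rhoS_r_plus_1_odd; auto)+
  moreover have "rhoS (r+2) (2*j) k = rhoS r (2*j) k"
    using j r_ge_2 rhoS_mirror_high[of "r+2" "2*j" k] by (simp add: rclass_rsign_even)
  ultimately show ?thesis
    using 1 j by (simp add: rhoS_r_plus_1_even rhoS_r_even) (insert clT_in_carrier, algebra)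
next
  case (2 j)
  then have j: "0 \<le> j" "j \<le> l - 1" using assms by auto
  have "rhoS (r+1) (2*j+1) k' = \<zero>\<^bsub>RT\<^esub>" for k'
    using j by (intro rhoS_r_plus_1_odd) auto
  moreover have "rhoS (r+2) (2*j+1) k = \<ominus>\<^bsub>RT\<^esub> \<one>\<^bsub>RT\<^esub> \<otimes>\<^bsub>RT\<^esub> rhoS r (2*j+1) k"
    using j r_ge_2 rhoS_mirror_high[of "r+2" "2*j+1" k] by (simp add: rclass_rsign_odd)
  moreover have "rhoS (r+1) (2*j+1+1) k = Tc r (j+1) k \<otimes>\<^bsub>RT\<^esub> Tc r (j+1) k"
    using j rhoS_r_plus_1_even[of "j+1" k] by (simp add: algebra_simps)
  ultimately show ?thesis
    using 2 j by (simp add: rhoS_r_plus_1_even rhoS_r_odd) (insert clT_in_carrier, algebra)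
qed

lemma rhoS_rel_low:
  assumes a: "1 \<le> a" "a \<le> r+1" and m: "1 \<le> m" "m \<le> 2*l-1"
  shows "rhoS a m (k-1) \<otimes>\<^bsub>RT\<^esub> rhoS a m (k+1)
    = rhoS a (m-1) k \<otimes>\<^bsub>RT\<^esub> rhoS a (m+1) k \<oplus>\<^bsub>RT\<^esub> rhoS (a-1) m k \<otimes>\<^bsub>RT\<^esub> rhoS (a+1) m k"
proof -
  consider "a \<le> r-2" | "a = r-1" | "a = r" | "a = r+1" using a by linarith
  then show ?thesis
  proof cases
    case 1 then show ?thesis using a m by (simp add: rhoS_low T_rel_bulk)
  next
    case 2 then show ?thesis using rhoS_rel_r_minus_1[OF m, of k] unfolding 2 by simp
  next
    case 3 then show ?thesis using rhoS_rel_r[OF m] by simp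
  next
    case 4 then show ?thesis using rhoS_rel_r_plus_1[OF m, of k] unfolding 4 by (simp add: ac_simps)
  qed
qed

text \<open>For \<open>a \<ge> r + 2\<close> the relation is the one at \<open>2r + 2 - a\<close> with every factor multiplied
  by a sign; in each product the two signs agree.\<close>

lemma rhoS_rel:
  assumes a: "1 \<le> a" "a \<le> 2*r+1" and m: "1 \<le> m" "m \<le> 2*l-1"
  shows "rhoS a m (k-1) \<otimes>\<^bsub>RT\<^esub> rhoS a m (k+1)
    = rhoS a (m-1) k \<otimes>\<^bsub>RT\<^esub> rhoS a (m+1) k \<oplus>\<^bsub>RT\<^esub> rhoS (a-1) m k \<otimes>\<^bsub>RT\<^esub> rhoS (a+1) m k"
proof (cases "a \<le> r+1")
  case True then show ?thesis using rhoS_rel_low a m by blast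
next
  case False
  define b where "b = 2*r+2-a"
  have b: "1 \<le> b" "b \<le> r" using False a unfolding b_def by auto
  have mirror: "rhoS a m' k' = clT (rsign m') \<otimes>\<^bsub>RT\<^esub> rhoS b m' k'"
    if "0 \<le> m'" "m' \<le> 2*l" for m' k'
    using rhoS_mirror_high[of a m' k'] that False a unfolding b_def by simp
  have "rhoS (a-1) m k = clT (rsign m) \<otimes>\<^bsub>RT\<^esub> rhoS (b+1) m k"
    and "rhoS (a+1) m k = clT (rsign m) \<otimes>\<^bsub>RT\<^esub> rhoS (b-1) m k"
    using rhoS_mirror[of "a-1" m k] rhoS_mirror[of "a+1" m k] a m False
    unfolding b_def by (simp_all add: algebra_simps)
  moreover have "rhoS a m k' = clT (rsign m) \<otimes>\<^bsub>RT\<^esub> rhoS b m k'" for k'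
    using m by (intro mirror) auto
  moreover have "rhoS a (m-1) k = clT (rsign (m-1)) \<otimes>\<^bsub>RT\<^esub> rhoS b (m-1) k"
    and "rhoS a (m+1) k = clT (rsign (m+1)) \<otimes>\<^bsub>RT\<^esub> rhoS b (m+1) k"
    using m by (intro mirror; auto)+
  moreover have "rhoS b m (k-1) \<otimes>\<^bsub>RT\<^esub> rhoS b m (k+1)
      = rhoS b (m-1) k \<otimes>\<^bsub>RT\<^esub> rhoS b (m+1) k \<oplus>\<^bsub>RT\<^esub> rhoS (b-1) m k \<otimes>\<^bsub>RT\<^esub> rhoS (b+1) m k"
    using rhoS_rel_low[of b m k] b m by simp
  moreover have "clT (rsign (m-1)) = \<ominus>\<^bsub>RT\<^esub> clT (rsign m)"
    and "clT (rsign (m+1)) = \<ominus>\<^bsub>RT\<^esub> clT (rsign m)"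
    by (cases "even m"; simp add: rclass_rsign_even rclass_rsign_odd)+
  ultimately show ?thesis
    using clT_rsign_square[of m] by simp (insert clT_in_carrier, algebra)
qed

lemma rho_gen_low_inv:
  assumes g: "(a, m, k) \<in> gens_S r l" and a: "a \<le> r+1"
  shows "clT (rho_gen_low r l a m k) \<otimes>\<^bsub>RT\<^esub> clT (rho_inv_low r l a m k) = \<one>\<^bsub>RT\<^esub>"
proof -
  have m: "1 \<le> a" "1 \<le> m" "m \<le> 2*l-1" "\<not> (a = r+1 \<and> odd m)" using g by (auto simp: gens_S_iff)
  consider "a \<le> r-1" | "a = r" | "a = r+1" using a by linarith
  then show ?thesis
  proof cases
    case 1
    then have "(a, m, k) \<in> invs_T r l" using m by (simp add: invs_T_def)
    from rclass_RGen_RInv[OF this] show ?thesis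
      using 1 m by (simp add: rho_gen_low_def rho_inv_low_def tT_gen)
  next
    case 2
    show ?thesis
    proof (cases rule: even_odd_cases[of m])
      case (1 j)
      then have "1 \<le> j" "j \<le> l-1" using m by auto
      with 1 2 r_ge_2 show ?thesis
        by (simp add: rho_gen_low_def rho_inv_low_def rclass_ring_simps int_halves,
            intro T.mult_of_right_inverses) (simp_all add: Tc_Tc_inv)
    next
      case (2 j)
      then have "0 \<le> j" "j \<le> l-1" using m by auto
      with 2 \<open>a = r\<close> r_ge_2 show ?thesis
        by (simp add: rho_gen_low_def rho_inv_low_def rclass_ring_simps int_halves,
            intro T.mult_of_right_inverses) (simp_all add: Tc_Tc_inv)
    qed
  next
    case 3
    then obtain j where j: "m = 2*j" using m by (metis evenE)
    then have "1 \<le> j" "j \<le> l-1" using m by auto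
    with 3 j r_ge_2 show ?thesis
      by (simp add: rho_gen_low_def rho_inv_low_def rclass_ring_simps int_halves,
          intro T.mult_of_right_inverses) (simp_all add: Tc_Tc_inv)
  qed
qed

lemma rho_gen_inv:
  assumes g: "(a, m, k) \<in> gens_S r l"
  shows "clT (rho_gen r l (a, m, k)) \<otimes>\<^bsub>RT\<^esub> clT (rho_inv r l (a, m, k)) = \<one>\<^bsub>RT\<^esub>"
proof (cases "a \<le> r+1")
  case True then show ?thesis using g rho_gen_low_inv by (simp add: rho_gen_def rho_inv_def)
next
  case False
  then have "(2*r+2-a, m, k) \<in> gens_S r l" using g by (auto simp: gens_S_iff)
  from rho_gen_low_inv[OF this] False
  have "clT (rho_gen_low r l (2*r+2-a) m k) \<otimes>\<^bsub>RT\<^esub> clT (rho_inv_low r l (2*r+2-a) m k) = \<one>\<^bsub>RT\<^esub>"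
    by simp
  then show ?thesis using g False
    by (simp add: rho_gen_def rho_inv_def rclass_ring_simps, intro T.mult_of_right_inverses)
      (simp_all add: clT_rsign_square)
qed

lemma presentation_map_rho:
  "presentation_map (gens_S r l) (gens_S r l) (rels_S r l) (gens_T r l) (invs_T r l) (rels_T r l)
     (rho_gen r l) (rho_inv r l)"
proof
  fix g assume "g \<in> gens_S r l"
  then show "clT (rho_gen r l g) \<otimes>\<^bsub>RT\<^esub> clT (rho_inv r l g) = \<one>\<^bsub>RT\<^esub>"
    by (cases g) (simp only: rho_gen_inv)
next
  fix e f assume "(e, f) \<in> rels_S r l"
  then consider (rel) a m k where
      "e = RMul (sS r l a m (k-1)) (sS r l a m (k+1))"
      "f = RAdd (RMul (sS r l a (m-1) k) (sS r l a (m+1) k)) (RMul (sS r l (a-1) m k) (sS r l (a+1) m k))"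
      "1 \<le> a" "a \<le> 2*r + 1" "1 \<le> m" "m \<le> 2*l - 1"
    | (mirror) a m k where "e = sS r l a m k" "f = RMul (rsign m) (sS r l (2*r + 2 - a) m k)"
      "1 \<le> a" "a \<le> 2*r + 1" "1 \<le> m" "m \<le> 2*l - 1"
    unfolding rels_S_def by blast
  then show "clT (rho_subst e) = clT (rho_subst f)"
  proof cases
    case rel then show ?thesis by (simp add: rclass_ring_simps rhoS_rel)
  next
    case mirror then show ?thesis by (simp add: rclass_ring_simps) (rule rhoS_mirror; simp)
  qed
qed (auto simp: rho_gen_def rho_inv_def rclass_RZero)

lemma S_rel:
  assumes "1 \<le> a" "a \<le> 2*r + 1" "1 \<le> m" "m \<le> 2*l - 1"
  shows "Sc a m (k-1) \<otimes>\<^bsub>RS\<^esub> Sc a m (k+1)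
    = Sc a (m-1) k \<otimes>\<^bsub>RS\<^esub> Sc a (m+1) k \<oplus>\<^bsub>RS\<^esub> Sc (a-1) m k \<otimes>\<^bsub>RS\<^esub> Sc (a+1) m k"
proof -
  have "(RMul (sS r l a m (k-1)) (sS r l a m (k+1)),
       RAdd (RMul (sS r l a (m-1) k) (sS r l a (m+1) k))
            (RMul (sS r l (a-1) m k) (sS r l (a+1) m k))) \<in> rels_S r l"
    unfolding rels_S_def using assms by blast
  from rclass_rel[OF this] show ?thesis by (simp add: rclass_ring_simps)
qed

lemma S_mirror:
  assumes "1 \<le> a" "a \<le> 2*r + 1" "1 \<le> m" "m \<le> 2*l - 1"
  shows "Sc a m k = clS (rsign m) \<otimes>\<^bsub>RS\<^esub> Sc (2*r + 2 - a) m k"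
proof -
  have "(sS r l a m k, RMul (rsign m) (sS r l (2*r + 2 - a) m k)) \<in> rels_S r l"
    unfolding rels_S_def using assms by blast
  from rclass_rel[OF this] show ?thesis by (simp add: rclass_ring_simps)
qed

lemma Sc_trivial: "a = 0 \<or> m = 0 \<or> m = 2*l \<Longrightarrow> Sc a m k = \<one>\<^bsub>RS\<^esub>"
  by (simp add: sS_def rclass_ring_simps)

lemma Sc_r_plus_1_odd: "odd m \<Longrightarrow> 1 \<le> m \<Longrightarrow> m \<le> 2*l-1 \<Longrightarrow> Sc (r+1) m k = \<zero>\<^bsub>RS\<^esub>"
  using r_ge_2 by (simp add: sS_def rclass_ring_simps)

lemma Sc_r_odd: "0 \<le> j \<Longrightarrow> j + 1 \<le> l \<Longrightarrow> Sc r (2*j+1) k = clS (RGen (r, 2*j+1, k))"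
  using r_ge_2 by (simp add: sS_gen)

lemma Sc_r_odd_inv:
  "0 \<le> j \<Longrightarrow> j + 1 \<le> l \<Longrightarrow> Sc r (2*j+1) k \<otimes>\<^bsub>RS\<^esub> clS (RInv (r, 2*j+1, k)) = \<one>\<^bsub>RS\<^esub>"
  using r_ge_2 by (simp add: Sc_r_odd rclass_RGen_RInv gens_S_iff)

lemma preim_Tr_succ:
  assumes "0 \<le> j"
  shows "preim_Tr r (nat (j+1)) k = RMul (RGen (r, 2*j+1, k)) (preim_Tr_inv r (nat j) k)"
    and "preim_Tr_inv r (nat (j+1)) k = RMul (RInv (r, 2*j+1, k)) (preim_Tr r (nat j) k)"
proof -
  have "nat (j+1) = Suc (nat j)" using assms by simp
  then show "preim_Tr r (nat (j+1)) k = RMul (RGen (r, 2*j+1, k)) (preim_Tr_inv r (nat j) k)"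
    and "preim_Tr_inv r (nat (j+1)) k = RMul (RInv (r, 2*j+1, k)) (preim_Tr r (nat j) k)"
    by simp_all
qed

lemma Pc_succ:
  "0 \<le> j \<Longrightarrow> j + 1 \<le> l \<Longrightarrow> Pc (j+1) k = Sc r (2*j+1) k \<otimes>\<^bsub>RS\<^esub> Pc_inv j k"
  by (simp add: preim_Tr_succ Sc_r_odd rclass_ring_simps)

lemma Pc_inv_succ:
  "0 \<le> j \<Longrightarrow> Pc_inv (j+1) k = clS (RInv (r, 2*j+1, k)) \<otimes>\<^bsub>RS\<^esub> Pc j k"
  by (simp add: preim_Tr_succ rclass_ring_simps)

lemma Pc_Pc_inv: "0 \<le> j \<Longrightarrow> j \<le> l \<Longrightarrow> Pc j k \<otimes>\<^bsub>RS\<^esub> Pc_inv j k = \<one>\<^bsub>RS\<^esub>"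
proof (induction j rule: int_ge_induct[consumes 1, case_names base step])
  case base then show ?case by (simp add: rclass_ring_simps)
next
  case (step j)
  then have "Pc_inv j k \<otimes>\<^bsub>RS\<^esub> Pc j k = \<one>\<^bsub>RS\<^esub>" by (simp add: S.m_comm)
  with step show ?case
    by (simp add: Pc_succ Pc_inv_succ, intro S.mult_of_right_inverses) (simp_all add: Sc_r_odd_inv)
qed

lemma Pc_consecutive: "0 \<le> j \<Longrightarrow> j + 1 \<le> l \<Longrightarrow> Pc j k \<otimes>\<^bsub>RS\<^esub> Pc (j+1) k = Sc r (2*j+1) k"
proof -
  assume j: "0 \<le> j" "j + 1 \<le> l"
  then have "Pc j k \<otimes>\<^bsub>RS\<^esub> Pc (j+1) k = Sc r (2*j+1) k \<otimes>\<^bsub>RS\<^esub> (Pc j k \<otimes>\<^bsub>RS\<^esub> Pc_inv j k)"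
    by (simp add: Pc_succ) (insert clS_in_carrier, algebra)
  then show ?thesis using j by (simp add: Pc_Pc_inv)
qed

lemma Pc_shift_product: "0 \<le> j \<Longrightarrow> j \<le> l \<Longrightarrow> Pc j (k-1) \<otimes>\<^bsub>RS\<^esub> Pc j (k+1) = Sc r (2*j) k"
proof (induction j arbitrary: k rule: int_ge_induct[consumes 1, case_names base step])
  case base then show ?case by (simp add: rclass_ring_simps Sc_trivial)
next
  case (step j)
  then have j: "0 \<le> j" "j + 1 \<le> l" by simp_all
  \<comment> \<open>the \<open>A\<close>-relation at \<open>(r, 2j+1)\<close>, whose last term vanishes since \<open>S^(r+1)_{odd} = 0\<close>\<close>
  have rel: "Sc r (2*j+1) (k-1) \<otimes>\<^bsub>RS\<^esub> Sc r (2*j+1) (k+1) = Sc r (2*j) k \<otimes>\<^bsub>RS\<^esub> Sc r (2*(j+1)) k"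
    using S_rel[of r "2*j+1" k] Sc_r_plus_1_odd[of "2*j+1" k] j r_ge_2 by (simp add: algebra_simps)
  have IH: "Pc j (k-1) \<otimes>\<^bsub>RS\<^esub> Pc j (k+1) = Sc r (2*j) k" using step by simp
  have "Pc (j+1) (k-1) \<otimes>\<^bsub>RS\<^esub> Pc (j+1) (k+1) =
     (Sc r (2*j+1) (k-1) \<otimes>\<^bsub>RS\<^esub> Sc r (2*j+1) (k+1)) \<otimes>\<^bsub>RS\<^esub> (Pc_inv j (k-1) \<otimes>\<^bsub>RS\<^esub> Pc_inv j (k+1))"
    using j by (simp add: Pc_succ) (insert clS_in_carrier, algebra)
  also have "\<dots> = Sc r (2*(j+1)) k \<otimes>\<^bsub>RS\<^esub>
      ((Pc j (k-1) \<otimes>\<^bsub>RS\<^esub> Pc_inv j (k-1)) \<otimes>\<^bsub>RS\<^esub> (Pc j (k+1) \<otimes>\<^bsub>RS\<^esub> Pc_inv j (k+1)))"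
    unfolding rel IH[symmetric] by (insert clS_in_carrier, algebra)
  also have "\<dots> = Sc r (2*(j+1)) k" using j by (simp add: Pc_Pc_inv)
  finally show ?case .
qed

lemma Pc_square: "0 \<le> j \<Longrightarrow> j \<le> l \<Longrightarrow> Pc j k \<otimes>\<^bsub>RS\<^esub> Pc j k = Sc (r+1) (2*j) k"
proof (induction j rule: int_ge_induct[consumes 1, case_names base step])
  case base then show ?case by (simp add: rclass_ring_simps Sc_trivial)
next
  case (step j)
  then have j: "0 \<le> j" "j + 1 \<le> l" by simp_all
  define X where "X = Sc r (2*j+1) k"
  have "Sc (r+2) (2*j+1) k = \<ominus>\<^bsub>RS\<^esub> \<one>\<^bsub>RS\<^esub> \<otimes>\<^bsub>RS\<^esub> X"
    using S_mirror[of "r+2" "2*j+1" k] j r_ge_2 unfolding X_def by (simp add: rclass_rsign_odd)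
  \<comment> \<open>the \<open>A\<close>-relation at \<open>(r+1, 2j+1)\<close>, whose left side vanishes\<close>
  then have vanish: "Sc (r+1) (2*j) k \<otimes>\<^bsub>RS\<^esub> Sc (r+1) (2*(j+1)) k
      \<oplus>\<^bsub>RS\<^esub> X \<otimes>\<^bsub>RS\<^esub> (\<ominus>\<^bsub>RS\<^esub> \<one>\<^bsub>RS\<^esub> \<otimes>\<^bsub>RS\<^esub> X) = \<zero>\<^bsub>RS\<^esub>"
    using S_rel[of "r+1" "2*j+1" k] Sc_r_plus_1_odd[of "2*j+1"] j r_ge_2 unfolding X_def
    by (simp add: algebra_simps)
  have rel: "Sc (r+1) (2*j) k \<otimes>\<^bsub>RS\<^esub> Sc (r+1) (2*(j+1)) k = X \<otimes>\<^bsub>RS\<^esub> X"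
  proof -
    have "Sc (r+1) (2*j) k \<otimes>\<^bsub>RS\<^esub> Sc (r+1) (2*(j+1)) k
      = (Sc (r+1) (2*j) k \<otimes>\<^bsub>RS\<^esub> Sc (r+1) (2*(j+1)) k
          \<oplus>\<^bsub>RS\<^esub> X \<otimes>\<^bsub>RS\<^esub> (\<ominus>\<^bsub>RS\<^esub> \<one>\<^bsub>RS\<^esub> \<otimes>\<^bsub>RS\<^esub> X)) \<oplus>\<^bsub>RS\<^esub> X \<otimes>\<^bsub>RS\<^esub> X"
      unfolding X_def by (insert clS_in_carrier, algebra)
    then show ?thesis unfolding vanish unfolding X_def by simp
  qed
  have IH: "Pc j k \<otimes>\<^bsub>RS\<^esub> Pc j k = Sc (r+1) (2*j) k" using step by simp
  have "Pc (j+1) k \<otimes>\<^bsub>RS\<^esub> Pc (j+1) k = (X \<otimes>\<^bsub>RS\<^esub> X) \<otimes>\<^bsub>RS\<^esub> (Pc_inv j k \<otimes>\<^bsub>RS\<^esub> Pc_inv j k)"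
    using j unfolding X_def by (simp add: Pc_succ) (insert clS_in_carrier, algebra)
  also have "\<dots> = Sc (r+1) (2*(j+1)) k \<otimes>\<^bsub>RS\<^esub>
      ((Pc j k \<otimes>\<^bsub>RS\<^esub> Pc_inv j k) \<otimes>\<^bsub>RS\<^esub> (Pc j k \<otimes>\<^bsub>RS\<^esub> Pc_inv j k))"
    unfolding rel[symmetric] IH[symmetric] unfolding X_def by (insert clS_in_carrier, algebra)
  also have "\<dots> = Sc (r+1) (2*(j+1)) k" using j by (simp add: Pc_Pc_inv)
  finally show ?case .
qed

lemma sigmaT_low: "0 \<le> a \<Longrightarrow> a \<le> r-1 \<Longrightarrow> 0 \<le> m \<Longrightarrow> m \<le> 2*l \<Longrightarrow> sigmaT a m k = Sc a m k"
proof -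
  assume h: "0 \<le> a" "a \<le> r-1" "0 \<le> m" "m \<le> 2*l"
  show ?thesis
  proof (cases "a = 0 \<or> m = 0 \<or> m = 2*l")
    case True then show ?thesis using h by (auto simp: tT_def sS_def)
  next
    case False
    then have "(a, m, k) \<in> gens_T r l" using h by (auto simp: gens_T_def)
    then show ?thesis using False h by (simp add: tT_gen sS_gen sigma_gen_def)
  qed
qed

lemma sigmaT_r: "0 \<le> j \<Longrightarrow> j \<le> l \<Longrightarrow> sigmaT r j k = Pc j k"
proof -
  assume h: "0 \<le> j" "j \<le> l"
  show ?thesis
  proof (cases "j = 0")
    case False
    then have "(r, j, k) \<in> gens_T r l" using h by (auto simp: gens_T_def)
    then show ?thesis using False h r_ge_2 by (simp add: tT_gen sigma_gen_def)
  qed (simp add: tT_def)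
qed

text \<open>Under \<open>\<sigma>\<close> the \<open>T^(r)\<close>-relation is the \<open>A\<close>-relation at \<open>(r, 2m)\<close> divided by
  \<open>\<sigma>(T^(r)_m(u))\<^sup>2\<close>.\<close>

lemma Pc_rel:
  assumes m: "1 \<le> m" "m \<le> l - 1"
  shows "Pc m (k-2) \<otimes>\<^bsub>RS\<^esub> Pc m (k+2)
    = Pc (m-1) k \<otimes>\<^bsub>RS\<^esub> Pc (m+1) k \<oplus>\<^bsub>RS\<^esub> Sc (r-1) (2*m) k"
proof -
  define A B C D E F Q where "A = Pc m (k-2)" and "B = Pc m k" and "C = Pc m (k+2)"
    and "D = Pc (m-1) k" and "E = Pc (m+1) k" and "F = Sc (r-1) (2*m) k" and "Q = Pc_inv m k"
  have BQ: "B \<otimes>\<^bsub>RS\<^esub> Q = \<one>\<^bsub>RS\<^esub>" unfolding B_def Q_def using Pc_Pc_inv[of m k] m by simp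
  have "A \<otimes>\<^bsub>RS\<^esub> B = Sc r (2*m) (k-1)" and "B \<otimes>\<^bsub>RS\<^esub> C = Sc r (2*m) (k+1)"
    and "D \<otimes>\<^bsub>RS\<^esub> B = Sc r (2*m-1) k" and "B \<otimes>\<^bsub>RS\<^esub> E = Sc r (2*m+1) k"
    and "B \<otimes>\<^bsub>RS\<^esub> B = Sc (r+1) (2*m) k"
    unfolding A_def B_def C_def D_def E_def
    using Pc_shift_product[of m "k-1"] Pc_shift_product[of m "k+1"] Pc_consecutive[of "m-1" k]
      Pc_consecutive[of m k] Pc_square[of m k] m
    by (simp_all add: add.commute)
  then have rel: "(A \<otimes>\<^bsub>RS\<^esub> B) \<otimes>\<^bsub>RS\<^esub> (B \<otimes>\<^bsub>RS\<^esub> C)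
      = (D \<otimes>\<^bsub>RS\<^esub> B) \<otimes>\<^bsub>RS\<^esub> (B \<otimes>\<^bsub>RS\<^esub> E) \<oplus>\<^bsub>RS\<^esub> F \<otimes>\<^bsub>RS\<^esub> (B \<otimes>\<^bsub>RS\<^esub> B)"
    unfolding F_def using S_rel[of r "2*m" k] m r_ge_2 by simp
  have carrier: "A \<in> carrier RS" "B \<in> carrier RS" "C \<in> carrier RS" "D \<in> carrier RS"
    "E \<in> carrier RS" "F \<in> carrier RS" "Q \<in> carrier RS"
    unfolding A_def B_def C_def D_def E_def F_def Q_def by simp_all
  have "A \<otimes>\<^bsub>RS\<^esub> C = ((A \<otimes>\<^bsub>RS\<^esub> B) \<otimes>\<^bsub>RS\<^esub> (B \<otimes>\<^bsub>RS\<^esub> C)) \<otimes>\<^bsub>RS\<^esub> (Q \<otimes>\<^bsub>RS\<^esub> Q)"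
  proof -
    have "A \<otimes>\<^bsub>RS\<^esub> C = (A \<otimes>\<^bsub>RS\<^esub> C) \<otimes>\<^bsub>RS\<^esub> ((B \<otimes>\<^bsub>RS\<^esub> Q) \<otimes>\<^bsub>RS\<^esub> (B \<otimes>\<^bsub>RS\<^esub> Q))"
      using carrier by (simp add: BQ)
    then show ?thesis using carrier by algebra
  qed
  also have "\<dots> = (D \<otimes>\<^bsub>RS\<^esub> E \<oplus>\<^bsub>RS\<^esub> F) \<otimes>\<^bsub>RS\<^esub> ((B \<otimes>\<^bsub>RS\<^esub> Q) \<otimes>\<^bsub>RS\<^esub> (B \<otimes>\<^bsub>RS\<^esub> Q))"
    unfolding rel using carrier by algebra
  also have "\<dots> = D \<otimes>\<^bsub>RS\<^esub> E \<oplus>\<^bsub>RS\<^esub> F" using carrier by (simp add: BQ)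
  finally show ?thesis unfolding A_def C_def D_def E_def F_def .
qed

lemma Pc_l_periodic: "Pc l (k+2) = Pc l k"
proof -
  have "Pc l k \<otimes>\<^bsub>RS\<^esub> Pc l (k+2) = \<one>\<^bsub>RS\<^esub>" and "Pc l k \<otimes>\<^bsub>RS\<^esub> Pc l k = \<one>\<^bsub>RS\<^esub>"
    using Pc_shift_product[of l "k+1"] Pc_square[of l k] l_ge_2
    by (simp_all add: Sc_trivial add.commute)
  then show ?thesis
    using S.inv_unique[of "Pc l k" "Pc l k" "Pc l (k+2)"] by simp
qed

lemma sigma_gen_inv:
  assumes g: "(a, m, k) \<in> invs_T r l"
  shows "clS (sigma_gen r l (a, m, k)) \<otimes>\<^bsub>RS\<^esub> clS (sigma_inv r l (a, m, k)) = \<one>\<^bsub>RS\<^esub>"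
proof -
  have T: "(a, m, k) \<in> gens_T r l" using g by (auto simp: invs_T_def gens_T_def)
  show ?thesis
  proof (cases "a = r")
    case True
    then have "1 \<le> m" "m \<le> l - 1" using g r_ge_2 by (auto simp: invs_T_def)
    then show ?thesis using g T True Pc_Pc_inv[of m k] by (simp add: sigma_gen_def sigma_inv_def)
  next
    case False
    then have "(a, m, k) \<in> gens_S r l" using g by (auto simp: invs_T_def gens_S_iff)
    then show ?thesis
      using g T False rclass_RGen_RInv[of "(a, m, k)"] by (simp add: sigma_gen_def sigma_inv_def)
  qed
qed

lemma presentation_map_sigma:
  "presentation_map (gens_T r l) (invs_T r l) (rels_T r l) (gens_S r l) (gens_S r l) (rels_S r l)
     (sigma_gen r l) (sigma_inv r l)"
proof
  fix g assume "g \<in> invs_T r l"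
  then show "clS (sigma_gen r l g) \<otimes>\<^bsub>RS\<^esub> clS (sigma_inv r l g) = \<one>\<^bsub>RS\<^esub>"
    by (cases g) (simp only: sigma_gen_inv)
next
  fix e f assume "(e, f) \<in> rels_T r l"
  then consider
     (bulk) a m k where "e = RMul (tT r l a m (k-1)) (tT r l a m (k+1))"
       "f = RAdd (RMul (tT r l a (m-1) k) (tT r l a (m+1) k)) (RMul (tT r l (a-1) m k) (tT r l (a+1) m k))"
       "1 \<le> a" "a \<le> r - 2" "1 \<le> m" "m \<le> 2*l - 1"
   | (even) m k where "e = RMul (tT r l (r-1) (2*m) (k-1)) (tT r l (r-1) (2*m) (k+1))"
       "f = RAdd (RMul (tT r l (r-1) (2*m-1) k) (tT r l (r-1) (2*m+1) k))
            (RMul (tT r l (r-2) (2*m) k) (RMul (tT r l r m (k-1)) (tT r l r m (k+1))))"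
       "1 \<le> m" "m \<le> l - 1"
   | (odd) m k where "e = RMul (tT r l (r-1) (2*m+1) (k-1)) (tT r l (r-1) (2*m+1) (k+1))"
       "f = RAdd (RMul (tT r l (r-1) (2*m) k) (tT r l (r-1) (2*m+2) k))
            (RMul (tT r l (r-2) (2*m+1) k) (RMul (tT r l r m k) (tT r l r (m+1) k)))"
       "0 \<le> m" "m \<le> l - 1"
   | (r) m k where "e = RMul (tT r l r m (k-2)) (tT r l r m (k+2))"
       "f = RAdd (RMul (tT r l r (m-1) k) (tT r l r (m+1) k)) (tT r l (r-1) (2*m) k)"
       "1 \<le> m" "m \<le> l - 1"
   | (square) k where "e = RMul (tT r l r l k) (tT r l r l k)" "f = ROne"
   | (periodic) k where "e = tT r l r l (k+2)" "f = tT r l r l k"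
    unfolding rels_T_def by blast
  then show "clS (sigma_subst e) = clS (sigma_subst f)"
  proof cases
    case bulk then show ?thesis using S_rel[of a m k] r_ge_2 by (simp add: rclass_ring_simps sigmaT_low)
  next
    case even then show ?thesis
      using S_rel[of "r-1" "2*m" k] Pc_shift_product[of m k] r_ge_2
      by (simp add: rclass_ring_simps sigmaT_low sigmaT_r)
  next
    case odd then show ?thesis
      using S_rel[of "r-1" "2*m+1" k] Pc_consecutive[of m k] r_ge_2
      by (simp add: rclass_ring_simps sigmaT_low sigmaT_r add.commute)
  next
    case r then show ?thesis
      using Pc_rel[of m k] r_ge_2 by (simp add: rclass_ring_simps sigmaT_low sigmaT_r)
  next
    case square then show ?thesis
      using Pc_square[of l k] l_ge_2 by (simp add: rclass_ring_simps sigmaT_r Sc_trivial)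
  next
    case periodic then show ?thesis using Pc_l_periodic l_ge_2 by (simp add: sigmaT_r)
  qed
qed (auto simp: sigma_gen_def sigma_inv_def rclass_RZero)

lemma sigma_rho_gen_low:
  assumes g: "(a, m, k) \<in> gens_S r l" and a: "a \<le> r+1"
  shows "clS (sigma_subst (rho_gen_low r l a m k)) = clS (RGen (a, m, k))"
proof -
  have m: "1 \<le> a" "1 \<le> m" "m \<le> 2*l-1" "\<not> (a = r+1 \<and> odd m)" using g by (auto simp: gens_S_iff)
  consider "a \<le> r-1" | "a = r" | "a = r+1" using a by linarith
  then show ?thesis
  proof cases
    case 1 then show ?thesis using m r_ge_2 by (simp add: rho_gen_low_def sigmaT_low sS_gen)
  next
    case 2
    show ?thesis
    proof (cases rule: even_odd_cases[of m])
      case (1 j)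
      then have "1 \<le> j" "j \<le> l-1" using m by auto
      then show ?thesis using 1 2 r_ge_2 Pc_shift_product[of j k]
        by (simp add: rho_gen_low_def rclass_ring_simps int_halves sigmaT_r sS_gen)
    next
      case (2 j)
      then have "0 \<le> j" "j \<le> l-1" using m by auto
      then show ?thesis using 2 \<open>a = r\<close> r_ge_2 Pc_consecutive[of j k]
        by (simp add: rho_gen_low_def rclass_ring_simps int_halves sigmaT_r sS_gen add.commute)
    qed
  next
    case 3
    then obtain j where j: "m = 2*j" using m by (metis evenE)
    then have "1 \<le> j" "j \<le> l-1" using m by auto
    then show ?thesis using 3 j r_ge_2 Pc_square[of j k]
      by (simp add: rho_gen_low_def rclass_ring_simps int_halves sigmaT_r sS_gen)
  qed
qed

lemma sigma_rho_gen: "g \<in> gens_S r l \<Longrightarrow> clS (sigma_subst (rho_gen r l g)) = clS (RGen g)"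
proof -
  assume g: "g \<in> gens_S r l"
  obtain a m k where g_eq: "g = (a, m, k)" by (cases g)
  show ?thesis
  proof (cases "a \<le> r+1")
    case True then show ?thesis using g g_eq sigma_rho_gen_low by (simp add: rho_gen_def)
  next
    case False
    have h: "1 \<le> a" "a \<le> 2*r+1" "1 \<le> m" "m \<le> 2*l-1" using g g_eq by (auto simp: gens_S_iff)
    have b: "(2*r+2-a, m, k) \<in> gens_S r l" using g g_eq False by (auto simp: gens_S_iff)
    have "clS (sigma_subst (rho_gen_low r l (2*r+2-a) m k)) = Sc (2*r+2-a) m k"
      using sigma_rho_gen_low[OF b] b False by (simp add: sS_gen gens_S_iff)
    moreover have "Sc a m k = clS (RGen (a, m, k))" using h False by (simp add: sS_gen)
    ultimately show ?thesis
      using g g_eq False S_mirror[OF h, of k] by (simp add: rho_gen_def rclass_ring_simps)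
  qed
qed

lemma rho_preim_Tr:
  "0 \<le> j \<Longrightarrow> j \<le> l \<Longrightarrow> clT (rho_subst (preim_Tr r (nat j) k)) = Tc r j k
    \<and> clT (rho_subst (preim_Tr_inv r (nat j) k)) \<otimes>\<^bsub>RT\<^esub> Tc r j k = \<one>\<^bsub>RT\<^esub>"
proof (induction j rule: int_ge_induct[consumes 1, case_names base step])
  case base then show ?case by (simp add: rclass_ring_simps tT_def)
next
  case (step j)
  then have j: "0 \<le> j" "j + 1 \<le> l"
    and IH: "clT (rho_subst (preim_Tr r (nat j) k)) = Tc r j k"
      "clT (rho_subst (preim_Tr_inv r (nat j) k)) \<otimes>\<^bsub>RT\<^esub> Tc r j k = \<one>\<^bsub>RT\<^esub>"
    by simp_all
  have gen: "(r, 2*j+1, k) \<in> gens_S r l" using j r_ge_2 by (simp add: gens_S_iff)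
  have img: "clT (rho_gen r l (r, 2*j+1, k)) = Tc r j k \<otimes>\<^bsub>RT\<^esub> Tc r (j+1) k"
    "clT (rho_inv r l (r, 2*j+1, k)) = Tc_inv j k \<otimes>\<^bsub>RT\<^esub> Tc_inv (j+1) k"
    using gen by (simp_all add: rho_gen_def rho_gen_low_def rho_inv_def rho_inv_low_def
        rclass_ring_simps int_halves add.commute)
  have inv: "Tc r j k \<otimes>\<^bsub>RT\<^esub> Tc_inv j k = \<one>\<^bsub>RT\<^esub>"
    "Tc r (j+1) k \<otimes>\<^bsub>RT\<^esub> Tc_inv (j+1) k = \<one>\<^bsub>RT\<^esub>"
    using j by (intro Tc_Tc_inv; simp)+
  have "clT (rho_subst (preim_Tr r (nat (j+1)) k))
      = Tc r (j+1) k \<otimes>\<^bsub>RT\<^esub> (clT (rho_subst (preim_Tr_inv r (nat j) k)) \<otimes>\<^bsub>RT\<^esub> Tc r j k)"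
    using j img(1) by (simp add: preim_Tr_succ rclass_ring_simps) (insert clT_in_carrier, algebra)
  moreover have "clT (rho_subst (preim_Tr_inv r (nat (j+1)) k)) \<otimes>\<^bsub>RT\<^esub> Tc r (j+1) k
      = (Tc r j k \<otimes>\<^bsub>RT\<^esub> Tc_inv j k) \<otimes>\<^bsub>RT\<^esub> (Tc r (j+1) k \<otimes>\<^bsub>RT\<^esub> Tc_inv (j+1) k)"
    using j img(2) IH(1) by (simp add: preim_Tr_succ rclass_ring_simps)
      (insert clT_in_carrier, algebra)
  ultimately show ?case using IH(2) inv by simp
qed

lemma rho_sigma_gen: "g \<in> gens_T r l \<Longrightarrow> clT (rho_subst (sigma_gen r l g)) = clT (RGen g)"
proof -
  assume g: "g \<in> gens_T r l"
  obtain a m k where g_eq: "g = (a, m, k)" by (cases g)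
  show ?thesis
  proof (cases "a = r")
    case True
    then have "1 \<le> m" "m \<le> l" using g g_eq r_ge_2 by (auto simp: gens_T_def)
    then show ?thesis using g g_eq True rho_preim_Tr[of m k] r_ge_2
      by (simp add: sigma_gen_def tT_gen)
  next
    case False
    then have "1 \<le> a" "a \<le> r - 1" "1 \<le> m" "m \<le> 2*l - 1" using g g_eq by (auto simp: gens_T_def)
    then show ?thesis using g g_eq False
      by (simp add: sigma_gen_def rho_gen_def rho_gen_low_def tT_gen gens_S_iff)
  qed
qed

definition rho :: "(int \<times> int \<times> int) rexp set \<Rightarrow> (int \<times> int \<times> int) rexp set" where
  "rho = presentation_map.induced (gens_T r l) (invs_T r l) (rels_T r l) (rho_gen r l) (rho_inv r l)"

lemma rho_ring_iso: "rho \<in> ring_iso (ring_S r l) (ring_T r l)"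
  unfolding rho_def ring_S_def ring_T_def
  by (rule induced_ring_iso[OF presentation_map_rho presentation_map_sigma sigma_rho_gen rho_sigma_gen])

lemma rho_RGen: "g \<in> gens_S r l \<Longrightarrow> rho (cls_S r l (RGen g)) = cls_T r l (rho_gen r l g)"
  unfolding rho_def cls_S_def cls_T_def
  by (simp add: presentation_map.induced_rclass[OF presentation_map_rho])

lemma rho_RGen_mirror:
  assumes "r + 2 \<le> a" "a \<le> 2*r + 1" "1 \<le> m" "m \<le> 2*l - 1"
  shows "rho (cls_S r l (RGen (a, m, k)))
    = (if even m then rho (cls_S r l (RGen (2*r + 2 - a, m, k)))
       else \<ominus>\<^bsub>ring_T r l\<^esub> rho (cls_S r l (RGen (2*r + 2 - a, m, k))))"
proof -
  have "(a, m, k) \<in> gens_S r l" "(2*r + 2 - a, m, k) \<in> gens_S r l"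
    using assms by (auto simp: gens_S_iff)
  then have "rho (cls_S r l (RGen (a, m, k)))
      = clT (rsign m) \<otimes>\<^bsub>RT\<^esub> clT (rho_gen_low r l (2*r + 2 - a) m k)"
    and "rho (cls_S r l (RGen (2*r + 2 - a, m, k))) = clT (rho_gen_low r l (2*r + 2 - a) m k)"
    using assms by (simp_all add: rho_RGen rho_gen_def cls_T_def rclass_ring_simps)
  then show ?thesis
    by (cases "even m") (simp_all add: ring_T_def rclass_rsign_even rclass_rsign_odd T.l_minus)
qed

end

theorem proposition6p8:
  fixes r l :: int
  assumes "r \<ge> 2" and "l \<ge> 2"
  shows "\<exists>\<rho>. \<rho> \<in> ring_iso (ring_S r l) (ring_T r l)
    \<and> (\<forall>a m k. 1 \<le> a \<and> a \<le> r - 1 \<and> 1 \<le> m \<and> m \<le> 2*l - 1 \<longrightarrow>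
          \<rho> (cls_S r l (RGen (a, m, k))) = cls_T r l (tT r l a m k))
    \<and> (\<forall>m k. 1 \<le> m \<and> m \<le> l - 1 \<longrightarrow>
          \<rho> (cls_S r l (RGen (r, 2*m, k)))
            = cls_T r l (RMul (tT r l r m (k-1)) (tT r l r m (k+1))))
    \<and> (\<forall>m k. 0 \<le> m \<and> m \<le> l - 1 \<longrightarrow>
          \<rho> (cls_S r l (RGen (r, 2*m+1, k)))
            = cls_T r l (RMul (tT r l r m k) (tT r l r (m+1) k)))
    \<and> (\<forall>m k. 1 \<le> m \<and> m \<le> l - 1 \<longrightarrow>
          \<rho> (cls_S r l (RGen (r+1, 2*m, k)))
            = cls_T r l (RMul (tT r l r m k) (tT r l r m k)))
    \<and> (\<forall>a m k. r + 2 \<le> a \<and> a \<le> 2*r + 1 \<and> 1 \<le> m \<and> m \<le> 2*l - 1 \<longrightarrow>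
          \<rho> (cls_S r l (RGen (a, m, k)))
            = (if even m then \<rho> (cls_S r l (RGen (2*r + 2 - a, m, k)))
               else \<ominus>\<^bsub>ring_T r l\<^esub> \<rho> (cls_S r l (RGen (2*r + 2 - a, m, k)))))"
proof -
  interpret tsystem_CA r l using assms by unfold_locales
  show ?thesis
    using r_ge_2 rho_ring_iso rho_RGen_mirror
    by (intro exI[of _ rho] conjI allI impI; simp add: rho_RGen gens_S_iff rho_gen_def
        rho_gen_low_def int_halves cls_T_def add.commute)
qed

end
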